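(* Let $\alpha,\beta$ be propositional formulas. If $\alpha\mathbin{|\!\sim}_{ow}\beta$, then there is a formula $\gamma$ with $V(\gamma)\subseteq V(\alpha)\cap V(\beta)$ such that $\alpha\mathbin{|\!\sim}_{ow}\gamma$ and $\gamma\vdash\beta$ in $\mathbf{HT}$.
   Context: $V(\varphi)$ is the set of atoms of $\varphi$. Here-and-there logic $\mathbf{HT}(V)$ over atom set $V$: interpretations are pairs $\langle H,T\rangle$, $H\subseteq T\subseteq V$, viewed as two-world Kripke models ($h\le t$; atoms true at $h$: $H$, at $t$: $T$) with intuitionistic Kripke clauses, $\neg\varphi:=\varphi\to\bot$; $\mathcal M\models\varphi$ iff $\varphi$ true at both worlds; $\Pi\vdash\varphi$ iff every $\mathbf{HT}$-model of $\Pi$ is a model of $\varphi$. An equilibrium model of $\Pi$ over $V$ is a model $\langle T,T\rangle$ of $\Pi$ in $\mathbf{HT}(V)$ with no model $\langle H,T\rangle$ of $\Pi$ with $H\subsetneq T$; $E_V(\Pi)$ is the set of these. Open-world equilibrium entailment: if $\Pi$ is non-empty and has equilibrium models, $\Pi\mathbin{|\!\sim}_{ow}\varphi$ iff $\mathcal M\models\varphi$ for every $\mathbf{HT}(V(\Pi)\cup V(\varphi))$-interpretation $\mathcal M$ whose restriction to $V(\Pi)$ belongs to $E_{V(\Pi)}(\Pi)$ (i.e., atoms outside $V(\Pi)$ are interpreted arbitrarily, with $H\subseteq T$); otherwise $\Pi\mathbin{|\!\sim}_{ow}\varphi$ iff $\Pi\vdash\varphi$. A formula $\alpha$ is identified with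 $\{\alpha\}$. *)

theory Defs
  imports Main
begin

datatype 'a fm = Atom 'a | Bot | And "'a fm" "'a fm" | Or "'a fm" "'a fm" | Imp "'a fm" "'a fm"

definition Neg :: "'a fm \<Rightarrow> 'a fm" where "Neg \<phi> = Imp \<phi> Bot"

fun atoms :: "'a fm \<Rightarrow> 'a set" where
  "atoms (Atom p) = {p}"
| "atoms Bot = {}"
| "atoms (And \<phi> \<psi>) = atoms \<phi> \<union> atoms \<psi>"
| "atoms (Or \<phi> \<psi>) = atoms \<phi> \<union> atoms \<psi>"
| "atoms (Imp \<phi> \<psi>) = atoms \<phi> \<union> atoms \<psi>"

definition atoms_set :: "'a fm set \<Rightarrow> 'a set" where
  "atoms_set \<Pi> = (\<Union>\<phi>\<in>\<Pi>. atoms \<phi>)"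

fun sat_t :: "'a set \<Rightarrow> 'a fm \<Rightarrow> bool" where
  "sat_t T (Atom p) = (p \<in> T)"
| "sat_t T Bot = False"
| "sat_t T (And \<phi> \<psi>) = (sat_t T \<phi> \<and> sat_t T \<psi>)"
| "sat_t T (Or \<phi> \<psi>) = (sat_t T \<phi> \<or> sat_t T \<psi>)"
| "sat_t T (Imp \<phi> \<psi>) = (sat_t T \<phi> \<longrightarrow> sat_t T \<psi>)"

text \<open>Truth at the world h (atoms H), Kripke clause for implication over h \<le> t.\<close>
fun sat_h :: "'a set \<Rightarrow> 'a set \<Rightarrow> 'a fm \<Rightarrow> bool" where
  "sat_h H T (Atom p) = (p \<in> H)"
| "sat_h H T Bot = False"
| "sat_h H T (And \<phi> \<psi>) = (sat_h H T \<phi> \<and> sat_h H T \<psi>)"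
| "sat_h H T (Or \<phi> \<psi>) = (sat_h H T \<phi> \<or> sat_h H T \<psi>)"
| "sat_h H T (Imp \<phi> \<psi>) = ((sat_h H T \<phi> \<longrightarrow> sat_h H T \<psi>) \<and> (sat_t T \<phi> \<longrightarrow> sat_t T \<psi>))"

definition ht_models :: "'a set \<Rightarrow> 'a set \<Rightarrow> 'a fm \<Rightarrow> bool" where
  "ht_models H T \<phi> \<longleftrightarrow> sat_h H T \<phi> \<and> sat_t T \<phi>"

definition ht_models_set :: "'a set \<Rightarrow> 'a set \<Rightarrow> 'a fm set \<Rightarrow> bool" where
  "ht_models_set H T \<Pi> \<longleftrightarrow> (\<forall>\<phi>\<in>\<Pi>. ht_models H T \<phi>)"

definition ht_entails :: "'a fm set \<Rightarrow> 'a fm \<Rightarrow> bool" where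
  "ht_entails \<Pi> \<phi> \<longleftrightarrow> (\<forall>H T. H \<subseteq> T \<longrightarrow> ht_models_set H T \<Pi> \<longrightarrow> ht_models H T \<phi>)"

text \<open>Equilibrium models over V, represented by their T (the model is <T,T>).\<close>
definition equilibrium_models :: "'a set \<Rightarrow> 'a fm set \<Rightarrow> 'a set set" where
  "equilibrium_models V \<Pi> = {T. T \<subseteq> V \<and> ht_models_set T T \<Pi> \<and>
      \<not> (\<exists>H. H \<subset> T \<and> ht_models_set H T \<Pi>)}"

definition ow_entails :: "'a fm set \<Rightarrow> 'a fm \<Rightarrow> bool" where
  "ow_entails \<Pi> \<phi> \<longleftrightarrow>
     (if \<Pi> \<noteq> {} \<and> equilibrium_models (atoms_set \<Pi>) \<Pi> \<noteq> {}
      then (\<forall>H T. H \<subseteq> T \<longrightarrow> T \<subseteq> atoms_set \<Pi> \<union> atoms \<phi> \<longrightarrow>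
              H \<inter> atoms_set \<Pi> = T \<inter> atoms_set \<Pi> \<longrightarrow>
              T \<inter> atoms_set \<Pi> \<in> equilibrium_models (atoms_set \<Pi>) \<Pi> \<longrightarrow>
              ht_models H T \<phi>)
      else ht_entails \<Pi> \<phi>)"

end

theory Submission
  imports Defs
begin

(* Put Va = V(alpha), Vb = V(beta), C = Va \<inter> Vb.  Two facts about HT do the work.
   (1) Definability: any class of HT-interpretations that depends only on the atoms of a finite
       set C and is closed under passing from <H,T> to <T,T> is the model class of a formula over
       C (a conjunction of formulas, each excluding one pair of C-projections).
   (2) Gluing: two interpretations that agree on C can be combined into one that agrees with the
       first on Va and with the second on Vb.
   From these, for any class K of interpretations that is closed under totalisation and under
   arbitrary changes outside Va, and on which beta holds, the formula defining the C-projection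
   of K holds on K and HT-entails beta (lemma class_interpolant).  The theorem follows by taking
   for K either the expansions of the equilibrium models of alpha (when alpha has equilibrium
   models) or the HT-models of alpha (otherwise, where open-world entailment is HT-entailment). *)

lemma finite_atoms: "finite (atoms \<phi>)"
  by (induction \<phi>) auto

lemma sat_coincidence:
  assumes "atoms \<phi> \<subseteq> S" "T \<inter> S = T' \<inter> S" "H \<inter> S = H' \<inter> S"
  shows "(sat_t T \<phi> \<longleftrightarrow> sat_t T' \<phi>) \<and> (sat_h H T \<phi> \<longleftrightarrow> sat_h H' T' \<phi>)"
  using assms by (induction \<phi>) auto

lemma ht_models_coincidence:
  assumes "atoms \<phi> \<subseteq> S" "T \<inter> S = T' \<inter> S" "H \<inter> S = H' \<inter> S"
  shows "ht_models H T \<phi> \<longleftrightarrow> ht_models H' T' \<phi>"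
  using sat_coincidence[OF assms] unfolding ht_models_def by blast

lemma sat_h_total: "sat_h T T \<phi> = sat_t T \<phi>"
  by (induction \<phi>) auto

lemma ht_models_total: "ht_models H T \<phi> \<Longrightarrow> ht_models T T \<phi>"
  by (simp add: ht_models_def sat_h_total)

fun conj_list :: "'a fm list \<Rightarrow> 'a fm" where
  "conj_list [] = Imp Bot Bot"
| "conj_list (\<phi> # \<phi>s) = And \<phi> (conj_list \<phi>s)"

fun disj_list :: "'a fm list \<Rightarrow> 'a fm" where
  "disj_list [] = Bot"
| "disj_list (\<phi> # \<phi>s) = Or \<phi> (disj_list \<phi>s)"

definition big_and :: "'a fm set \<Rightarrow> 'a fm" where
  "big_and F = conj_list (SOME \<phi>s. set \<phi>s = F)"

definition big_or :: "'a fm set \<Rightarrow> 'a fm" where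
  "big_or F = disj_list (SOME \<phi>s. set \<phi>s = F)"

lemma conj_list_sem:
  "sat_t T (conj_list \<phi>s) = (\<forall>\<phi>\<in>set \<phi>s. sat_t T \<phi>)"
  "sat_h H T (conj_list \<phi>s) = (\<forall>\<phi>\<in>set \<phi>s. sat_h H T \<phi>)"
  "atoms (conj_list \<phi>s) = (\<Union>\<phi>\<in>set \<phi>s. atoms \<phi>)"
  by (induction \<phi>s) auto

lemma disj_list_sem:
  "sat_t T (disj_list \<phi>s) = (\<exists>\<phi>\<in>set \<phi>s. sat_t T \<phi>)"
  "sat_h H T (disj_list \<phi>s) = (\<exists>\<phi>\<in>set \<phi>s. sat_h H T \<phi>)"
  "atoms (disj_list \<phi>s) = (\<Union>\<phi>\<in>set \<phi>s. atoms \<phi>)"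
  by (induction \<phi>s) auto

lemma enumeration_set: "finite F \<Longrightarrow> set (SOME \<phi>s. set \<phi>s = F) = F"
  by (rule someI_ex) (rule finite_list)

lemma big_and_sem:
  assumes "finite F"
  shows "sat_t T (big_and F) = (\<forall>\<phi>\<in>F. sat_t T \<phi>)"
    and "sat_h H T (big_and F) = (\<forall>\<phi>\<in>F. sat_h H T \<phi>)"
    and "atoms (big_and F) = (\<Union>\<phi>\<in>F. atoms \<phi>)"
  using assms by (simp_all add: big_and_def conj_list_sem enumeration_set)

lemma big_or_sem:
  assumes "finite F"
  shows "sat_t T (big_or F) = (\<exists>\<phi>\<in>F. sat_t T \<phi>)"
    and "sat_h H T (big_or F) = (\<exists>\<phi>\<in>F. sat_h H T \<phi>)"
    and "atoms (big_or F) = (\<Union>\<phi>\<in>F. atoms \<phi>)"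
  using assms by (simp_all add: big_or_def disj_list_sem enumeration_set)

definition exclusion :: "'a set \<Rightarrow> 'a set \<Rightarrow> 'a set \<Rightarrow> 'a fm" where
  "exclusion C A B =
     Imp (And (big_and (Atom ` A))
              (And (big_and ((\<lambda>p. Neg (Atom p)) ` (C - B)))
                   (big_and ((\<lambda>p. Neg (Neg (Atom p))) ` (B - A)))))
         (big_or (Atom ` (B - A)))"

lemma exclusion_atoms:
  assumes "finite C" "A \<subseteq> B" "B \<subseteq> C"
  shows "atoms (exclusion C A B) \<subseteq> C"
  using assms unfolding exclusion_def
  by (auto simp: big_and_sem big_or_sem Neg_def finite_subset)

lemma exclusion_sem:
  assumes "finite C" "A \<subseteq> B" "B \<subseteq> C" "H \<subseteq> T"
  shows "ht_models H T (exclusion C A B) \<longleftrightarrow>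
           \<not> (T \<inter> C = B \<and> (A = B \<or> H \<inter> C = A))"
proof -
  have fin: "finite A" "finite B"
    using assms finite_subset by metis+
  have premise_t: "A \<subseteq> T \<and> (C - B) \<inter> T = {} \<and> B - A \<subseteq> T \<longleftrightarrow> T \<inter> C = B"
    using assms by blast
  have premise_h: "A \<subseteq> H \<and> (C - B) \<inter> T = {} \<and> B - A \<subseteq> T \<longleftrightarrow> A \<subseteq> H \<and> T \<inter> C = B"
    using assms by blast
  have t: "sat_t T (exclusion C A B) \<longleftrightarrow> T \<inter> C \<noteq> B \<or> (B - A) \<inter> T \<noteq> {}"
    unfolding exclusion_def premise_t[symmetric]
    using fin assms by (auto simp: big_and_sem big_or_sem Neg_def)
  have h: "sat_h H T (exclusion C A B) \<longleftrightarrow>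
             (\<not> (A \<subseteq> H \<and> T \<inter> C = B) \<or> (B - A) \<inter> H \<noteq> {}) \<and> sat_t T (exclusion C A B)"
    unfolding exclusion_def premise_h[symmetric]
    using fin assms by (auto simp: big_and_sem big_or_sem Neg_def)
  show ?thesis
    unfolding ht_models_def h t using assms by blast
qed

lemma definable_projection_class:
  assumes fin: "finite C"
    and total: "\<And>A B. (A, B) \<in> M \<Longrightarrow> (B, B) \<in> M"
  shows "\<exists>\<gamma>. atoms \<gamma> \<subseteq> C \<and>
             (\<forall>H T. H \<subseteq> T \<longrightarrow> (ht_models H T \<gamma> \<longleftrightarrow> (H \<inter> C, T \<inter> C) \<in> M))"
proof -
  define X where "X = {(A, B). A \<subseteq> B \<and> B \<subseteq> C \<and> (A, B) \<notin> M}"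
  define \<gamma> where "\<gamma> = big_and (case_prod (exclusion C) ` X)"
  have "X \<subseteq> Pow C \<times> Pow C"
    unfolding X_def by auto
  then have finX: "finite (case_prod (exclusion C) ` X)"
    using fin by (meson finite_Pow_iff finite_SigmaI finite_subset finite_imageI)
  have "atoms \<gamma> \<subseteq> C"
    unfolding \<gamma>_def using finX exclusion_atoms[OF fin] by (auto simp: big_and_sem X_def)
  moreover have "ht_models H T \<gamma> \<longleftrightarrow> (H \<inter> C, T \<inter> C) \<in> M" if "H \<subseteq> T" for H T
  proof -
    have "ht_models H T \<gamma> \<longleftrightarrow> (\<forall>(A, B)\<in>X. ht_models H T (exclusion C A B))"
      unfolding \<gamma>_def ht_models_def using finX by (auto simp: big_and_sem)
    also have "\<dots> \<longleftrightarrow> (\<forall>(A, B)\<in>X. \<not> (T \<inter> C = B \<and> (A = B \<or> H \<inter> C = A)))"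
      using exclusion_sem[OF fin _ _ that] unfolding X_def by auto
    also have "\<dots> \<longleftrightarrow> (H \<inter> C, T \<inter> C) \<in> M"
    proof
      assume "\<forall>(A, B)\<in>X. \<not> (T \<inter> C = B \<and> (A = B \<or> H \<inter> C = A))"
      then have "(H \<inter> C, T \<inter> C) \<notin> X"
        by blast
      then show "(H \<inter> C, T \<inter> C) \<in> M"
        using that unfolding X_def by blast
    next
      assume "(H \<inter> C, T \<inter> C) \<in> M"
      then show "\<forall>(A, B)\<in>X. \<not> (T \<inter> C = B \<and> (A = B \<or> H \<inter> C = A))"
        using total[of "H \<inter> C" "T \<inter> C"] unfolding X_def by blast
    qed
    finally show ?thesis .
  qed
  ultimately show ?thesis
    by blast
qed

lemma glue:
  assumes "H\<^sub>0 \<subseteq> T\<^sub>0" "H \<subseteq> T"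
    and "H \<inter> (Va \<inter> Vb) = H\<^sub>0 \<inter> (Va \<inter> Vb)" "T \<inter> (Va \<inter> Vb) = T\<^sub>0 \<inter> (Va \<inter> Vb)"
  defines "H' \<equiv> (H\<^sub>0 \<inter> Va) \<union> (H \<inter> Vb - Va)"
    and "T' \<equiv> (T\<^sub>0 \<inter> Va) \<union> (T \<inter> Vb - Va)"
  shows "H' \<subseteq> T'" "T' \<subseteq> Va \<union> Vb"
    and "H' \<inter> Va = H\<^sub>0 \<inter> Va" "T' \<inter> Va = T\<^sub>0 \<inter> Va"
    and "H' \<inter> Vb = H \<inter> Vb" "T' \<inter> Vb = T \<inter> Vb"
  using assms by blast+

lemma class_interpolant:
  assumes fin: "finite Va"
    and pairs: "\<And>H T. (H, T) \<in> K \<Longrightarrow> H \<subseteq> T"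
    and total: "\<And>H T. (H, T) \<in> K \<Longrightarrow> (T, T) \<in> K"
    and local_Va: "\<And>H T H' T'. (H, T) \<in> K \<Longrightarrow> H' \<subseteq> T' \<Longrightarrow> T' \<subseteq> Va \<union> Vb \<Longrightarrow>
                     H' \<inter> Va = H \<inter> Va \<Longrightarrow> T' \<inter> Va = T \<inter> Va \<Longrightarrow> (H', T') \<in> K"
    and \<beta>_atoms: "atoms \<beta> \<subseteq> Vb"
    and \<beta>_holds: "\<And>H T. (H, T) \<in> K \<Longrightarrow> ht_models H T \<beta>"
  shows "\<exists>\<gamma>. atoms \<gamma> \<subseteq> Va \<inter> Vb \<and> (\<forall>(H, T)\<in>K. ht_models H T \<gamma>) \<and> ht_entails {\<gamma>} \<beta>"
proof -
  define C where "C = Va \<inter> Vb"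
  define M where "M = {(H \<inter> C, T \<inter> C) | H T. (H, T) \<in> K}"
  have "finite C"
    using fin unfolding C_def by blast
  moreover have "(B, B) \<in> M" if "(A, B) \<in> M" for A B
    using that total unfolding M_def by blast
  ultimately obtain \<gamma> where \<gamma>_atoms: "atoms \<gamma> \<subseteq> C"
    and \<gamma>_sem: "\<And>H T. H \<subseteq> T \<Longrightarrow> ht_models H T \<gamma> \<longleftrightarrow> (H \<inter> C, T \<inter> C) \<in> M"
    using definable_projection_class by metis
  have "ht_models H T \<gamma>" if "(H, T) \<in> K" for H T
    using that pairs \<gamma>_sem unfolding M_def by blast
  moreover have "ht_models H T \<beta>" if HT: "H \<subseteq> T" and \<gamma>_true: "ht_models H T \<gamma>" for H T
  proof -
    obtain H\<^sub>0 T\<^sub>0 where K0: "(H\<^sub>0, T\<^sub>0) \<in> K"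
      and agree: "H \<inter> C = H\<^sub>0 \<inter> C" "T \<inter> C = T\<^sub>0 \<inter> C"
      using \<gamma>_sem[OF HT] \<gamma>_true unfolding M_def by blast
    note glued = glue[OF pairs[OF K0] HT agree[unfolded C_def]]
    have "ht_models ((H\<^sub>0 \<inter> Va) \<union> (H \<inter> Vb - Va)) ((T\<^sub>0 \<inter> Va) \<union> (T \<inter> Vb - Va)) \<beta>"
      using \<beta>_holds local_Va[OF K0] glued(1-4) by blast
    then show ?thesis
      using ht_models_coincidence[OF \<beta>_atoms glued(6,5)] by blast
  qed
  ultimately show ?thesis
    using \<gamma>_atoms unfolding C_def ht_entails_def ht_models_set_def by auto
qed

definition eq_expansions :: "'a set \<Rightarrow> 'a fm \<Rightarrow> ('a set \<times> 'a set) set" where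
  "eq_expansions W \<alpha> =
     {(H, T). H \<subseteq> T \<and> T \<subseteq> W \<and> H \<inter> atoms \<alpha> = T \<inter> atoms \<alpha> \<and>
              T \<inter> atoms \<alpha> \<in> equilibrium_models (atoms \<alpha>) {\<alpha>}}"

lemma ow_entails_equilibrium:
  assumes "equilibrium_models (atoms \<alpha>) {\<alpha>} \<noteq> {}"
  shows "ow_entails {\<alpha>} \<phi> \<longleftrightarrow>
           (\<forall>(H, T)\<in>eq_expansions (atoms \<alpha> \<union> atoms \<phi>) \<alpha>. ht_models H T \<phi>)"
  using assms unfolding ow_entails_def eq_expansions_def atoms_set_def by auto

lemma ow_entails_no_equilibrium:
  assumes "equilibrium_models (atoms \<alpha>) {\<alpha>} = {}"
  shows "ow_entails {\<alpha>} \<phi> \<longleftrightarrow> ht_entails {\<alpha>} \<phi>"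
  using assms unfolding ow_entails_def atoms_set_def by simp

theorem proposition5:
  fixes \<alpha> \<beta> :: "'a fm"
  assumes "ow_entails {\<alpha>} \<beta>"
  shows "\<exists>\<gamma>. atoms \<gamma> \<subseteq> atoms \<alpha> \<inter> atoms \<beta> \<and> ow_entails {\<alpha>} \<gamma> \<and> ht_entails {\<gamma>} \<beta>"
proof (cases "equilibrium_models (atoms \<alpha>) {\<alpha>} = {}")
  case False
  define K where "K = eq_expansions (atoms \<alpha> \<union> atoms \<beta>) \<alpha>"
  have "\<exists>\<gamma>. atoms \<gamma> \<subseteq> atoms \<alpha> \<inter> atoms \<beta> \<and> (\<forall>(H, T)\<in>K. ht_models H T \<gamma>) \<and> ht_entails {\<gamma>} \<beta>"
  proof (rule class_interpolant[OF finite_atoms])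
    show "ht_models H T \<beta>" if "(H, T) \<in> K" for H T
      using assms that unfolding ow_entails_equilibrium[OF False] K_def by blast
  qed (auto simp: K_def eq_expansions_def)
  then obtain \<gamma> where \<gamma>_atoms: "atoms \<gamma> \<subseteq> atoms \<alpha> \<inter> atoms \<beta>"
    and \<gamma>_on_K: "\<forall>(H, T)\<in>K. ht_models H T \<gamma>" and "ht_entails {\<gamma>} \<beta>"
    by blast
  moreover have "eq_expansions (atoms \<alpha> \<union> atoms \<gamma>) \<alpha> \<subseteq> K"
    using \<gamma>_atoms unfolding K_def eq_expansions_def by auto
  then have "ow_entails {\<alpha>} \<gamma>"
    using \<gamma>_on_K unfolding ow_entails_equilibrium[OF False] by blast
  ultimately show ?thesis
    by blast
next
  case True
  define K where "K = {(H, T). H \<subseteq> T \<and> ht_models H T \<alpha>}"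
  have "\<exists>\<gamma>. atoms \<gamma> \<subseteq> atoms \<alpha> \<inter> atoms \<beta> \<and> (\<forall>(H, T)\<in>K. ht_models H T \<gamma>) \<and> ht_entails {\<gamma>} \<beta>"
  proof (rule class_interpolant[OF finite_atoms])
    show "(H', T') \<in> K" if "(H, T) \<in> K" "H' \<subseteq> T'" "H' \<inter> atoms \<alpha> = H \<inter> atoms \<alpha>"
      "T' \<inter> atoms \<alpha> = T \<inter> atoms \<alpha>" for H T H' T'
      using that ht_models_coincidence[of \<alpha> "atoms \<alpha>" T' T H' H] unfolding K_def by auto
  qed (use assms True in \<open>auto simp: K_def ht_models_total ow_entails_no_equilibrium
                                     ht_entails_def ht_models_set_def\<close>)
  then show ?thesis
    using True by (auto simp: ow_entails_no_equilibrium K_def ht_entails_def ht_models_set_def)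
qed

end
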